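(* Let $A,B\subset\mathbb N$ be such that $A\cup B$ is a set of pointwise recurrence for minimal distal systems. Then at least one of $A$, $B$ is a set of pointwise recurrence for minimal distal systems.
   Context: A system is a compact metric space with a homeomorphism $T$; minimal: no proper nonempty closed invariant subset; distal: $\inf_{n\in\mathbb Z}d(T^nx,T^nx')>0$ for $x\ne x'$. $R\subset\mathbb N$ is a set of pointwise recurrence for minimal distal systems if for every minimal distal system $(X,T)$ and every $x\in X$, $\inf_{n\in R}d(T^nx,x)=0$. *)

theory Defs
  imports "HOL-Analysis.Analysis"
begin

definition is_system :: "'a::metric_space set \<Rightarrow> ('a \<Rightarrow> 'a) \<Rightarrow> bool" where
  "is_system X T \<longleftrightarrow> compact X \<and> (\<exists>S. homeomorphism X X T S)"

definition int_iter :: "'a set \<Rightarrow> ('a \<Rightarrow> 'a) \<Rightarrow> int \<Rightarrow> 'a \<Rightarrow> 'a" where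
  "int_iter X T n = (if 0 \<le> n then T ^^ nat n else (inv_into X T) ^^ nat (- n))"

definition minimal_system :: "'a::metric_space set \<Rightarrow> ('a \<Rightarrow> 'a) \<Rightarrow> bool" where
  "minimal_system X T \<longleftrightarrow> is_system X T \<and>
     (\<forall>Y. Y \<subseteq> X \<and> Y \<noteq> {} \<and> closed Y \<and> T ` Y = Y \<longrightarrow> Y = X)"

definition distal_system :: "'a::metric_space set \<Rightarrow> ('a \<Rightarrow> 'a) \<Rightarrow> bool" where
  "distal_system X T \<longleftrightarrow> is_system X T \<and>
     (\<forall>x\<in>X. \<forall>x'\<in>X. x \<noteq> x' \<longrightarrow>
        (\<exists>e>0. \<forall>n::int. e \<le> dist (int_iter X T n x) (int_iter X T n x')))"

definition pw_recurrence_md :: "'a::metric_space itself \<Rightarrow> nat set \<Rightarrow> bool" where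
  "pw_recurrence_md _ R \<longleftrightarrow>
     (\<forall>(X::'a set) T. minimal_system X T \<and> distal_system X T \<longrightarrow>
        (\<forall>x\<in>X. \<forall>e>0. \<exists>n\<in>R. dist ((T ^^ n) x) x < e))"

end

theory Submission
  imports Defs
begin

text \<open>Suppose neither \<open>A\<close> nor \<open>B\<close> is a set of recurrence, witnessed by points \<open>x\<^sub>1\<close> and \<open>x\<^sub>2\<close> of
  distal systems that stay \<open>\<epsilon>\<^sub>1\<close>-away from themselves along \<open>A\<close> and \<open>\<epsilon>\<^sub>2\<close>-away along \<open>B\<close>.
  The product system is again distal, and in a distal system every orbit closure is minimal:
  an idempotent \<open>u\<close> of the enveloping semigroup sending the point \<open>x\<close> into a given closed
  invariant subset satisfies \<open>u (u x) = u x\<close>, so by distality \<open>u x = x\<close>.  Hence the orbit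
  closure of \<open>(x\<^sub>1, x\<^sub>2)\<close> is a minimal distal system, and recurrence of \<open>A \<union> B\<close> at \<open>(x\<^sub>1, x\<^sub>2)\<close>
  yields one \<open>n \<in> A \<union> B\<close> that brings both coordinates back close, a contradiction.\<close>

section \<open>Compact sets of functions and the Ellis--Numakura lemma\<close>

lemma compact_imp_closed_fun:
  fixes K :: "('a \<Rightarrow> 'b::t2_space) set"
  assumes "compact K"
  shows "closed K"
proof -
  have "Hausdorff_space (euclidean :: 'b topology)"
    unfolding Hausdorff_space_def disjnt_def by (simp add: separation_t2)
  then have "Hausdorff_space (product_topology (\<lambda>_. euclidean :: 'b topology) (UNIV :: 'a set))"
    unfolding Hausdorff_space_product_topology by blast
  then have "Hausdorff_space (euclidean :: ('a \<Rightarrow> 'b) topology)"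
    by (simp only: euclidean_product_topology)
  then have "closedin euclidean K"
    using assms by (intro compactin_imp_closedin) simp_all
  then show ?thesis by simp
qed

lemma compact_funcset_UNIV:
  fixes Z :: "'b::topological_space set"
  assumes "compact Z"
  shows "compact (UNIV \<rightarrow> Z :: ('a \<Rightarrow> 'b) set)"
proof -
  have "compactin (product_topology (\<lambda>_. euclidean) UNIV) (Pi\<^sub>E (UNIV::'a set) (\<lambda>_. Z))"
    using assms by (simp add: compactin_PiE)
  then show ?thesis
    by (simp only: euclidean_product_topology PiE_UNIV_domain compactin_euclidean_iff)
qed

lemma continuous_on_apply: "continuous_on S (\<lambda>f::'a \<Rightarrow> 'b::topological_space. f z)"
  by (rule continuous_on_subset[OF continuous_on_product_coordinates]) simp

lemma continuous_on_comp_right: "continuous_on S (\<lambda>p::'a \<Rightarrow> 'b::topological_space. p \<circ> a)"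
proof (rule continuous_on_coordinatewise_then_product)
  show "continuous_on S (\<lambda>p. (p \<circ> a) i)" for i
    unfolding o_def by (rule continuous_on_apply)
qed

definition comp_closed :: "('a \<Rightarrow> 'a) set \<Rightarrow> bool" where
  "comp_closed K \<longleftrightarrow> (\<forall>p\<in>K. \<forall>q\<in>K. p \<circ> q \<in> K)"

lemma subset_chain_subset:
  assumes "subset.chain A C" "C' \<subseteq> C"
  shows "subset.chain A C'"
  unfolding subset_chain_def
proof (intro conjI ballI)
  show "C' \<subseteq> A" using assms unfolding subset_chain_def by (meson order_trans)
  fix X Y assume "X \<in> C'" "Y \<in> C'"
  then show "X \<subseteq> Y \<or> Y \<subseteq> X"
    using assms unfolding subset_chain_def by (meson subsetD)
qed

lemma compact_chain_Inter_nonempty: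
  fixes C :: "'a::topological_space set set"
  assumes "compact L" "subset.chain A C" "C \<noteq> {}"
    and C: "\<And>K. K \<in> C \<Longrightarrow> closed K \<and> K \<noteq> {} \<and> K \<subseteq> L"
  shows "\<Inter>C \<noteq> {}"
proof -
  have "L \<inter> \<Inter>C \<noteq> {}"
  proof (rule compact_imp_fip[OF assms(1)])
    show "closed K" if "K \<in> C" for K using C[OF that] by blast
    show "L \<inter> \<Inter>C' \<noteq> {}" if "finite C'" "C' \<subseteq> C" for C'
    proof (cases "C' = {}")
      case True
      then show ?thesis using assms(3) C by fastforce
    next
      case False
      have "subset.chain A C'" by (rule subset_chain_subset[OF assms(2) \<open>C' \<subseteq> C\<close>])
      then have "\<Inter>C' \<in> C'" by (rule Inter_in_chain[OF \<open>finite C'\<close> False])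
      then have "\<Inter>C' \<subseteq> L" "\<Inter>C' \<noteq> {}" using C \<open>C' \<subseteq> C\<close> by blast+
      then show ?thesis by (simp add: inf.absorb2)
    qed
  qed
  then show ?thesis by blast
qed

lemma minimal_closed_comp_closed_subset_exists:
  fixes L :: "('a \<Rightarrow> 'a::t2_space) set"
  assumes "compact L" "L \<noteq> {}" "comp_closed L"
  obtains M where "M \<subseteq> L" "M \<noteq> {}" "closed M" "comp_closed M"
    "\<And>K. K \<subseteq> M \<Longrightarrow> K \<noteq> {} \<Longrightarrow> closed K \<Longrightarrow> comp_closed K \<Longrightarrow> K = M"
proof -
  define F where "F = {K. K \<subseteq> L \<and> K \<noteq> {} \<and> closed K \<and> comp_closed K}"
  have "L \<in> F" using assms compact_imp_closed_fun by (auto simp: F_def)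
  have po: "partial_order_on F (relation_of (\<lambda>K K'. K' \<subseteq> K) F)"
    by (rule partial_order_on_relation_ofI) auto
  have "\<exists>M\<in>F. \<forall>K\<in>F. K \<subseteq> M \<longrightarrow> K = M"
  proof (rule predicate_Zorn[OF po])
    fix C assume "C \<in> Chains (relation_of (\<lambda>K K'. K' \<subseteq> K) F)"
    then have CF: "C \<subseteq> F" and chain: "subset.chain F C"
      unfolding subset_chain_def by (auto simp: Chains_def relation_of_def)
    show "\<exists>M\<in>F. \<forall>K\<in>C. M \<subseteq> K"
    proof (cases "C = {}")
      case True
      then show ?thesis using \<open>L \<in> F\<close> by blast
    next
      case False
      have "\<Inter>C \<noteq> {}"
        using compact_chain_Inter_nonempty[OF assms(1) chain False] CF unfolding F_def by blast
      moreover obtain K0 where "K0 \<in> C" using False by blast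
      then have "\<Inter>C \<subseteq> L" using CF by (auto simp: F_def)
      moreover have "closed (\<Inter>C)" using CF unfolding F_def by (intro closed_Inter) blast
      moreover have "comp_closed (\<Inter>C)"
        using CF unfolding F_def comp_closed_def by blast
      ultimately have "\<Inter>C \<in> F" by (auto simp: F_def)
      then show ?thesis by blast
    qed
  qed
  then obtain M where M: "M \<in> F" and M_min: "\<And>K. K \<in> F \<Longrightarrow> K \<subseteq> M \<Longrightarrow> K = M"
    by blast
  from M have "M \<subseteq> L" "M \<noteq> {}" "closed M" "comp_closed M" by (simp_all add: F_def)
  moreover have "K = M" if "K \<subseteq> M" "K \<noteq> {}" "closed K" "comp_closed K" for K
    using M_min[of K] that \<open>M \<subseteq> L\<close> unfolding F_def by blast
  ultimately show ?thesis by (rule that)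
qed

lemma comp_closed_image_comp_right:
  assumes "comp_closed M" "a \<in> M"
  shows "comp_closed ((\<lambda>p. p \<circ> a) ` M)"
  unfolding comp_closed_def
proof (intro ballI)
  fix f g assume "f \<in> (\<lambda>p. p \<circ> a) ` M" "g \<in> (\<lambda>p. p \<circ> a) ` M"
  then obtain p q where pq: "p \<in> M" "q \<in> M" and "f = p \<circ> a" "g = q \<circ> a" by blast
  then have "f \<circ> g = (p \<circ> a \<circ> q) \<circ> a" by (simp add: comp_assoc)
  moreover have "p \<circ> a \<circ> q \<in> M" using assms pq by (simp add: comp_closed_def)
  ultimately show "f \<circ> g \<in> (\<lambda>p. p \<circ> a) ` M" by (intro rev_image_eqI)
qed

text \<open>The Ellis--Numakura lemma; of the topology of composition only its continuity in the
  left factor is used.\<close>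
lemma compact_comp_closed_has_idempotent:
  fixes L :: "('a \<Rightarrow> 'a::t2_space) set"
  assumes "compact L" "L \<noteq> {}" "comp_closed L"
  shows "\<exists>u\<in>L. u \<circ> u = u"
proof -
  obtain M where M_sub: "M \<subseteq> L" and M: "M \<noteq> {}" "closed M" "comp_closed M"
    and M_min: "\<And>K. K \<subseteq> M \<Longrightarrow> K \<noteq> {} \<Longrightarrow> closed K \<Longrightarrow> comp_closed K \<Longrightarrow> K = M"
    using minimal_closed_comp_closed_subset_exists[OF assms] by blast
  have "compact (L \<inter> M)" by (rule compact_Int_closed[OF assms(1) M(2)])
  then have "compact M" using M_sub by (simp add: Int_absorb1)
  obtain a where a: "a \<in> M" using M(1) by auto
  have "(\<lambda>p. p \<circ> a) ` M = M"
  proof (rule M_min)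
    show "closed ((\<lambda>p. p \<circ> a) ` M)"
      by (intro compact_imp_closed_fun compact_continuous_image continuous_on_comp_right \<open>compact M\<close>)
    show "comp_closed ((\<lambda>p. p \<circ> a) ` M)" by (rule comp_closed_image_comp_right[OF M(3) a])
    show "(\<lambda>p. p \<circ> a) ` M \<subseteq> M"
      by (rule image_subsetI) (use M(3) a in \<open>simp add: comp_closed_def\<close>)
    show "(\<lambda>p. p \<circ> a) ` M \<noteq> {}" using a by blast
  qed
  then have "a \<in> (\<lambda>p. p \<circ> a) ` M" using a by simp
  then obtain e where "e \<in> M" "a = e \<circ> a" by (rule imageE)
  then have e: "e \<in> {p \<in> M. p \<circ> a = a}" by simp
  have "{p \<in> M. p \<circ> a = a} = M"
  proof (rule M_min)
    have eq: "{p \<in> M. p \<circ> a = a} = (\<Inter>z. {p \<in> M. p (a z) = a z})" by (auto simp: fun_eq_iff)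
    have closed_z: "closed {p \<in> M. p (a z) = a z}" for z
      by (rule continuous_closed_preimage_constant[OF continuous_on_apply M(2)])
    show "closed {p \<in> M. p \<circ> a = a}" unfolding eq by (rule closed_INT) (simp add: closed_z)
    show "comp_closed {p \<in> M. p \<circ> a = a}"
      using M(3) unfolding comp_closed_def by (simp add: comp_assoc)
    show "{p \<in> M. p \<circ> a = a} \<subseteq> M" by blast
    show "{p \<in> M. p \<circ> a = a} \<noteq> {}" using e by blast
  qed
  then have "a \<in> {p \<in> M. p \<circ> a = a}" using a by simp
  then show ?thesis using M_sub by blast
qed

section \<open>Orbit closures and the enveloping semigroup\<close>

definition orbit_closure :: "('a::topological_space \<Rightarrow> 'a) \<Rightarrow> 'a \<Rightarrow> 'a set" where
  "orbit_closure T x = closure (range (\<lambda>n. (T ^^ n) x))"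

lemma funpow_mem_orbit_closure: "(T ^^ n) x \<in> orbit_closure T x"
  unfolding orbit_closure_def by (rule subsetD[OF closure_subset]) (rule rangeI)

lemma mem_orbit_closure_self: "x \<in> orbit_closure T x"
  using funpow_mem_orbit_closure[of 0] by simp

lemma funpow_image_subset:
  assumes "T ` Y \<subseteq> Y" "y \<in> Y"
  shows "(T ^^ n) y \<in> Y"
  by (induction n) (use assms in auto)

lemma orbit_closure_subset:
  assumes "closed Z" "T ` Z \<subseteq> Z" "x \<in> Z"
  shows "orbit_closure T x \<subseteq> Z"
  unfolding orbit_closure_def
  using funpow_image_subset[OF assms(2,3)] assms(1) by (intro closure_minimal) auto

lemma image_orbit_closure_subset:
  assumes "continuous_on (orbit_closure T x) T"
  shows "T ` orbit_closure T x \<subseteq> closure (range (\<lambda>n. (T ^^ Suc n) x))"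
  using assms unfolding orbit_closure_def
proof (rule image_closure_subset)
  show "T ` range (\<lambda>n. (T ^^ n) x) \<subseteq> closure (range (\<lambda>n. (T ^^ Suc n) x))"
    using closure_subset by fastforce
qed simp

text \<open>Iterates start at 1 so that, for a map with values in a compact set, all elements
  take values in that set (the identity would not).\<close>
definition enveloping_semigroup :: "('a::topological_space \<Rightarrow> 'a) \<Rightarrow> ('a \<Rightarrow> 'a) set" where
  "enveloping_semigroup T = closure (range (\<lambda>n. T ^^ Suc n))"

lemma funpow_mem_enveloping_semigroup: "T ^^ Suc n \<in> enveloping_semigroup T"
  unfolding enveloping_semigroup_def by (rule subsetD[OF closure_subset]) (rule rangeI)

lemma enveloping_semigroup_subset_funcset:
  fixes T :: "'a::t2_space \<Rightarrow> 'a"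
  assumes "compact Z" "range T \<subseteq> Z"
  shows "enveloping_semigroup T \<subseteq> UNIV \<rightarrow> Z"
  unfolding enveloping_semigroup_def
proof (rule closure_minimal)
  show "range (\<lambda>n. T ^^ Suc n) \<subseteq> UNIV \<rightarrow> Z" using assms(2) by auto
  show "closed (UNIV \<rightarrow> Z)" by (rule compact_imp_closed_fun[OF compact_funcset_UNIV[OF assms(1)]])
qed

lemma compact_enveloping_semigroup:
  fixes T :: "'a::t2_space \<Rightarrow> 'a"
  assumes "compact Z" "range T \<subseteq> Z"
  shows "compact (enveloping_semigroup T)"
proof -
  have "compact ((UNIV \<rightarrow> Z) \<inter> enveloping_semigroup T)"
    by (rule compact_Int_closed[OF compact_funcset_UNIV[OF assms(1)]])
       (simp add: enveloping_semigroup_def)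
  then show ?thesis
    using enveloping_semigroup_subset_funcset[OF assms] by (simp add: Int_absorb1)
qed

lemma comp_left_mem_enveloping_semigroup:
  fixes T :: "'a::t2_space \<Rightarrow> 'a"
  assumes "compact Z" "continuous_on Z T" "range T \<subseteq> Z" "q \<in> enveloping_semigroup T"
  shows "T \<circ> q \<in> enveloping_semigroup T"
proof -
  let ?E = "enveloping_semigroup T"
  have "continuous_on (UNIV \<rightarrow> Z) (\<lambda>q. T \<circ> q)"
  proof (rule continuous_on_coordinatewise_then_product)
    show "continuous_on (UNIV \<rightarrow> Z) (\<lambda>q. (T \<circ> q) z)" for z
      unfolding o_def by (rule continuous_on_compose2[OF assms(2) continuous_on_apply]) auto
  qed
  then have "continuous_on ?E (\<lambda>q. T \<circ> q)"
    by (rule continuous_on_subset) (rule enveloping_semigroup_subset_funcset[OF assms(1,3)])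
  moreover have "T \<circ> T ^^ Suc n \<in> ?E" for n
    using funpow_mem_enveloping_semigroup[where n = "Suc n"] by (simp only: funpow.simps(2))
  ultimately have "(\<lambda>q. T \<circ> q) ` ?E \<subseteq> ?E"
    unfolding enveloping_semigroup_def
    by (intro image_closure_subset) (auto simp del: funpow.simps)
  then show ?thesis using assms(4) by blast
qed

lemma enveloping_semigroup_comp_closed:
  fixes T :: "'a::t2_space \<Rightarrow> 'a"
  assumes "compact Z" "continuous_on Z T" "range T \<subseteq> Z"
  shows "comp_closed (enveloping_semigroup T)"
  unfolding comp_closed_def
proof (intro ballI)
  let ?E = "enveloping_semigroup T"
  fix p q assume "p \<in> ?E" "q \<in> ?E"
  have funpow_comp: "T ^^ Suc n \<circ> q \<in> ?E" for n
  proof (induction n)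
    case 0
    then show ?case
      using comp_left_mem_enveloping_semigroup[OF assms \<open>q \<in> ?E\<close>]
      by (simp only: funpow.simps comp_id)
  next
    case (Suc n)
    then show ?case
      using comp_left_mem_enveloping_semigroup[OF assms] by (simp only: funpow.simps(2) comp_assoc)
  qed
  have "(\<lambda>p. p \<circ> q) ` ?E \<subseteq> ?E"
    unfolding enveloping_semigroup_def
  proof (intro image_closure_subset continuous_on_comp_right closed_closure image_subsetI)
    fix p assume "p \<in> range (\<lambda>n. T ^^ Suc n)"
    then show "p \<circ> q \<in> closure (range (\<lambda>n. T ^^ Suc n))"
      using funpow_comp unfolding enveloping_semigroup_def by blast
  qed
  then show "p \<circ> q \<in> ?E" using \<open>p \<in> ?E\<close> by blast
qed

lemma enveloping_semigroup_preserves_invariant: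
  assumes "closed Y" "T ` Y \<subseteq> Y" "p \<in> enveloping_semigroup T" "y \<in> Y"
  shows "p y \<in> Y"
proof -
  have "(\<lambda>p. p y) ` enveloping_semigroup T \<subseteq> Y"
    unfolding enveloping_semigroup_def
    by (intro image_closure_subset continuous_on_apply assms(1))
       (use funpow_image_subset[OF assms(2,4)] in blast)
  then show ?thesis using assms(3) by blast
qed

lemma enveloping_semigroup_dist_ge:
  fixes T :: "'a::metric_space \<Rightarrow> 'a"
  assumes "\<And>n. e \<le> dist ((T ^^ n) x) ((T ^^ n) z)" "p \<in> enveloping_semigroup T"
  shows "e \<le> dist (p x) (p z)"
proof -
  have "(\<lambda>p. dist (p x) (p z)) ` enveloping_semigroup T \<subseteq> {e..}"
    unfolding enveloping_semigroup_def using assms(1)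
    by (intro image_closure_subset continuous_on_dist continuous_on_apply closed_atLeast)
       (auto simp del: funpow.simps)
  then show ?thesis using assms(2) by blast
qed

lemma compact_enveloping_semigroup_Int_vimage:
  fixes T :: "'a::t2_space \<Rightarrow> 'a"
  assumes "compact Z" "range T \<subseteq> Z" "closed Y"
  shows "compact (enveloping_semigroup T \<inter> (\<lambda>p. p x) -` Y)"
proof -
  have "closed (enveloping_semigroup T \<inter> (\<lambda>p. p x) -` Y)"
    by (rule continuous_closed_preimage[OF continuous_on_apply _ assms(3)])
       (simp add: enveloping_semigroup_def)
  then have "compact (enveloping_semigroup T \<inter> (enveloping_semigroup T \<inter> (\<lambda>p. p x) -` Y))"
    by (rule compact_Int_closed[OF compact_enveloping_semigroup[OF assms(1,2)]])
  then show ?thesis by (simp only: Int_left_absorb)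
qed

lemma orbit_closure_image_subset_eval_enveloping_semigroup:
  fixes T :: "'a::t2_space \<Rightarrow> 'a"
  assumes "compact Z" "continuous_on Z T" "range T \<subseteq> Z" "x \<in> Z"
  shows "T ` orbit_closure T x \<subseteq> (\<lambda>p. p x) ` enveloping_semigroup T"
proof -
  have "orbit_closure T x \<subseteq> Z"
    using assms by (intro orbit_closure_subset compact_imp_closed) auto
  then have "T ` orbit_closure T x \<subseteq> closure (range (\<lambda>n. (T ^^ Suc n) x))"
    by (intro image_orbit_closure_subset continuous_on_subset[OF assms(2)])
  also have "\<dots> \<subseteq> (\<lambda>p. p x) ` enveloping_semigroup T"
  proof (rule closure_minimal)
    show "range (\<lambda>n. (T ^^ Suc n) x) \<subseteq> (\<lambda>p. p x) ` enveloping_semigroup T"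
    proof (rule image_subsetI)
      show "(T ^^ Suc n) x \<in> (\<lambda>p. p x) ` enveloping_semigroup T" for n
        by (rule rev_image_eqI[OF funpow_mem_enveloping_semigroup[where n = n]]) (rule refl)
    qed
    show "closed ((\<lambda>p. p x) ` enveloping_semigroup T)"
      using compact_enveloping_semigroup[OF assms(1,3)]
      by (intro compact_imp_closed compact_continuous_image continuous_on_apply)
  qed
  finally show ?thesis .
qed

lemma is_system_iff:
  fixes T :: "'a::metric_space \<Rightarrow> 'a"
  shows "is_system X T \<longleftrightarrow> compact X \<and> continuous_on X T \<and> T ` X = X \<and> inj_on T X"
proof
  assume "is_system X T"
  then obtain S where "compact X" "homeomorphism X X T S" by (auto simp: is_system_def)
  then show "compact X \<and> continuous_on X T \<and> T ` X = X \<and> inj_on T X"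
    unfolding homeomorphism_def by (metis inj_on_inverseI)
next
  assume "compact X \<and> continuous_on X T \<and> T ` X = X \<and> inj_on T X"
  then show "is_system X T"
    using homeomorphism_compact by (auto simp: is_system_def)
qed

lemma int_iter_of_nat [simp]: "int_iter X T (int n) = T ^^ n"
  by (simp add: int_iter_def)

lemma inv_into_subsystem:
  assumes "inj_on T Z" "W \<subseteq> Z" "T ` W = W" "w \<in> W"
  shows "inv_into W T w = inv_into Z T w"
proof -
  have "inv_into W T w \<in> W" "T (inv_into W T w) = w"
    using assms(3,4) by (auto intro: inv_into_into f_inv_into_f)
  then show ?thesis
    using inv_into_f_f[OF assms(1)] assms(2) by (metis subsetD)
qed

lemma int_iter_subsystem:
  assumes "inj_on T Z" "W \<subseteq> Z" "T ` W = W" "w \<in> W"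
  shows "int_iter W T n w = int_iter Z T n w"
proof -
  have inv_W: "inv_into W T ` W \<subseteq> W"
    using assms(3) by (auto intro: inv_into_into)
  have "((inv_into W T) ^^ m) w = ((inv_into Z T) ^^ m) w" for m
  proof (induction m)
    case (Suc m)
    have "((inv_into W T) ^^ m) w \<in> W" by (rule funpow_image_subset[OF inv_W assms(4)])
    then show ?case
      using Suc inv_into_subsystem[OF assms(1-3)] by simp
  qed simp
  then show ?thesis by (simp add: int_iter_def)
qed

lemma int_iter_mem:
  assumes "T ` X = X" "x \<in> X"
  shows "int_iter X T n x \<in> X"
proof -
  have "inv_into X T ` X \<subseteq> X" using assms(1) by (auto intro: inv_into_into)
  then show ?thesis
    using assms funpow_image_subset[of T X] funpow_image_subset[of "inv_into X T" X]
    by (simp add: int_iter_def)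
qed

lemma distal_system_subsystem:
  assumes "distal_system Z T" "is_system W T" "W \<subseteq> Z"
  shows "distal_system W T"
proof -
  have "inj_on T Z" "T ` W = W"
    using assms(1,2) by (simp_all add: is_system_iff distal_system_def)
  then show ?thesis
    using assms int_iter_subsystem[of T Z W] unfolding distal_system_def by (metis subsetD)
qed

section \<open>Orbit closures of distal systems are minimal\<close>

lemma forward_distal_point_mem_invariant_subset':
  fixes T :: "'a::metric_space \<Rightarrow> 'a"
  assumes "compact Z" "continuous_on Z T" "range T \<subseteq> Z" "x \<in> Z"
    and distal: "\<And>z. z \<in> Z \<Longrightarrow> z \<noteq> x \<Longrightarrow> \<exists>e>0. \<forall>n. e \<le> dist ((T ^^ n) x) ((T ^^ n) z)"
    and Y: "Y \<noteq> {}" "closed Y" "Y \<subseteq> orbit_closure T x" "T ` Y \<subseteq> Y"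
  shows "x \<in> Y"
proof -
  let ?E = "enveloping_semigroup T"
  define L where "L = ?E \<inter> (\<lambda>p. p x) -` Y"
  have "compact L"
    unfolding L_def by (rule compact_enveloping_semigroup_Int_vimage[OF assms(1,3) Y(2)])
  moreover have "L \<noteq> {}"
  proof -
    obtain y where "y \<in> Y" using Y(1) by blast
    then have "T y \<in> T ` orbit_closure T x" "T y \<in> Y" using Y(3,4) by auto
    then obtain p where "p \<in> ?E" "p x = T y"
      using orbit_closure_image_subset_eval_enveloping_semigroup[OF assms(1-4)] by auto
    then show ?thesis using \<open>T y \<in> Y\<close> by (auto simp: L_def)
  qed
  moreover have "comp_closed L"
    using enveloping_semigroup_comp_closed[OF assms(1-3)]
      enveloping_semigroup_preserves_invariant[OF Y(2,4)]
    by (auto simp: L_def comp_closed_def)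
  ultimately obtain u where u: "u \<in> ?E" "u x \<in> Y" and idem: "u \<circ> u = u"
    using compact_comp_closed_has_idempotent by (force simp: L_def)
  show "x \<in> Y"
  proof (rule ccontr)
    assume "x \<notin> Y"
    then have "u x \<noteq> x" using u(2) by auto
    moreover have "u x \<in> Z"
      using u(2) Y(3) orbit_closure_subset[OF compact_imp_closed[OF assms(1)] _ assms(4)] assms(3)
      by blast
    ultimately obtain e where "e > 0" "\<And>n. e \<le> dist ((T ^^ n) x) ((T ^^ n) (u x))"
      using distal by blast
    then have "e \<le> dist (u x) (u (u x))" using enveloping_semigroup_dist_ge u(1) by blast
    with \<open>e > 0\<close> idem show False by (metis comp_apply dist_self not_le)
  qed
qed

text \<open>Only forward iterates of the point are controlled, so \<open>T\<close> is first redefined off \<open>Z\<close>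
  to take all its values in \<open>Z\<close>, as the enveloping semigroup requires.\<close>
lemma forward_distal_point_mem_invariant_subset:
  fixes T :: "'a::metric_space \<Rightarrow> 'a"
  assumes "compact Z" "continuous_on Z T" "T ` Z \<subseteq> Z" "x \<in> Z"
    and distal: "\<And>z. z \<in> Z \<Longrightarrow> z \<noteq> x \<Longrightarrow> \<exists>e>0. \<forall>n. e \<le> dist ((T ^^ n) x) ((T ^^ n) z)"
    and Y: "Y \<noteq> {}" "closed Y" "Y \<subseteq> orbit_closure T x" "T ` Y \<subseteq> Y"
  shows "x \<in> Y"
proof -
  define T' where "T' z = (if z \<in> Z then T z else x)" for z
  have iter: "(T' ^^ n) z = (T ^^ n) z" if "z \<in> Z" for z n
    using funpow_image_subset[OF assms(3) that] by (induction n) (simp_all add: T'_def)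
  have "Y \<subseteq> Z"
    using Y(3) orbit_closure_subset[OF compact_imp_closed[OF assms(1)] assms(3,4)] by blast
  show ?thesis
  proof (rule forward_distal_point_mem_invariant_subset'[OF assms(1) _ _ assms(4) _ Y(1,2)])
    show "continuous_on Z T'"
      using assms(2) by (rule continuous_on_eq) (simp add: T'_def)
    show "range T' \<subseteq> Z" using assms(3,4) by (auto simp: T'_def)
    show "\<exists>e>0. \<forall>n. e \<le> dist ((T' ^^ n) x) ((T' ^^ n) z)" if "z \<in> Z" "z \<noteq> x" for z
      using distal[OF that] iter[OF assms(4)] iter[OF that(1)] by simp
    show "Y \<subseteq> orbit_closure T' x"
      using Y(3) iter[OF assms(4)] by (simp add: orbit_closure_def)
    show "T' ` Y \<subseteq> Y" using Y(4) \<open>Y \<subseteq> Z\<close> by (auto simp: T'_def)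
  qed
qed

lemma distal_system_forward_distal:
  assumes "distal_system Z T" "x \<in> Z" "z \<in> Z" "z \<noteq> x"
  shows "\<exists>e>0. \<forall>n. e \<le> dist ((T ^^ n) x) ((T ^^ n) z)"
proof -
  obtain e where "e > 0" "\<forall>n::int. e \<le> dist (int_iter Z T n x) (int_iter Z T n z)"
    using assms unfolding distal_system_def by metis
  then show ?thesis by (metis int_iter_of_nat)
qed

lemma image_orbit_closure_subset_self:
  assumes "continuous_on (orbit_closure T x) T"
  shows "T ` orbit_closure T x \<subseteq> orbit_closure T x"
proof -
  have "closure (range (\<lambda>n. (T ^^ Suc n) x)) \<subseteq> orbit_closure T x"
    unfolding orbit_closure_def by (intro closure_mono image_subsetI) (rule rangeI)
  then show ?thesis using image_orbit_closure_subset[OF assms] by blast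
qed

lemma minimal_system_orbit_closure:
  fixes T :: "'a::metric_space \<Rightarrow> 'a"
  assumes "distal_system Z T" "x \<in> Z"
  shows "minimal_system (orbit_closure T x) T"
proof -
  let ?W = "orbit_closure T x"
  have Z: "compact Z" "continuous_on Z T" "T ` Z = Z" "inj_on T Z"
    using assms(1) by (simp_all add: distal_system_def is_system_iff)
  have "?W \<subseteq> Z"
    using Z(1,3) assms(2) by (intro orbit_closure_subset compact_imp_closed) auto
  then have W: "compact ?W" "continuous_on ?W T" "inj_on T ?W"
    using compact_Int_closed[OF Z(1), of ?W] continuous_on_subset[OF Z(2)] inj_on_subset[OF Z(4)]
    by (simp_all add: orbit_closure_def Int_absorb1)
  have x_mem: "x \<in> Y" if "Y \<subseteq> ?W" "Y \<noteq> {}" "closed Y" "T ` Y \<subseteq> Y" for Y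
    using forward_distal_point_mem_invariant_subset[OF Z(1,2) _ assms(2)] Z(3) that
      distal_system_forward_distal[OF assms] by blast
  have TW: "T ` ?W = ?W"
  proof
    show "T ` ?W \<subseteq> ?W" by (rule image_orbit_closure_subset_self[OF W(2)])
    then have "x \<in> T ` ?W"
      using W(1,2) mem_orbit_closure_self[of x T]
      by (intro x_mem compact_imp_closed compact_continuous_image) auto
    then have "(T ^^ n) x \<in> T ` ?W" for n
      by (cases n) (auto intro: funpow_mem_orbit_closure)
    then show "?W \<subseteq> T ` ?W"
      unfolding orbit_closure_def
      using W(1,2) by (intro closure_minimal compact_imp_closed compact_continuous_image)
        (auto simp: orbit_closure_def)
  qed
  have "is_system ?W T" using W TW by (simp add: is_system_iff)
  moreover have "Y = ?W" if "Y \<subseteq> ?W" "Y \<noteq> {}" "closed Y" "T ` Y = Y" for Y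
  proof -
    have "range (\<lambda>n. (T ^^ n) x) \<subseteq> Y"
      using x_mem[OF that(1-3)] that(4) funpow_image_subset[of T Y] by auto
    then show ?thesis using that(1,3) by (auto simp: orbit_closure_def dest: closure_minimal)
  qed
  ultimately show ?thesis by (simp add: minimal_system_def)
qed

lemma distal_system_orbit_closure:
  fixes T :: "'a::metric_space \<Rightarrow> 'a"
  assumes "distal_system Z T" "x \<in> Z"
  shows "distal_system (orbit_closure T x) T"
proof (rule distal_system_subsystem[OF assms(1)])
  show "is_system (orbit_closure T x) T"
    using minimal_system_orbit_closure[OF assms] by (simp add: minimal_system_def)
  show "orbit_closure T x \<subseteq> Z"
    using assms by (intro orbit_closure_subset compact_imp_closed)
      (auto simp: distal_system_def is_system_iff)
qed

section \<open>Products realised by interleaving\<close>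

lemma uniformly_continuous_on_dist_bounded_below:
  assumes "uniformly_continuous_on Z g" "e > 0" "\<And>n. x n \<in> Z" "\<And>n. y n \<in> Z"
    and "\<And>n. e \<le> dist (g (x n)) (g (y n))"
  shows "\<exists>d>0. \<forall>n. d \<le> dist (x n) (y n)"
proof -
  obtain d where "d > 0" and d: "\<And>u v. u \<in> Z \<Longrightarrow> v \<in> Z \<Longrightarrow> dist v u < d \<Longrightarrow> dist (g v) (g u) < e"
    using assms(1,2) unfolding uniformly_continuous_on_def by metis
  have "d \<le> dist (x n) (y n)" for n
    using d[OF assms(4,3), of n] assms(5)[of n] by (metis dist_commute not_le)
  then show ?thesis using \<open>d > 0\<close> by blast
qed

text \<open>Splitting a sequence into its even and odd coordinates identifies
  \<open>(nat \<Rightarrow> 'a) \<times> (nat \<Rightarrow> 'a)\<close> with \<open>nat \<Rightarrow> 'a\<close>; this realises the product of two systems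
  inside the fixed ambient type \<open>nat \<Rightarrow> real\<close>.\<close>
definition even_part :: "(nat \<Rightarrow> 'a) \<Rightarrow> nat \<Rightarrow> 'a" where
  "even_part z = (\<lambda>k. z (2 * k))"

definition odd_part :: "(nat \<Rightarrow> 'a) \<Rightarrow> nat \<Rightarrow> 'a" where
  "odd_part z = (\<lambda>k. z (2 * k + 1))"

definition interleave :: "(nat \<Rightarrow> 'a) \<Rightarrow> (nat \<Rightarrow> 'a) \<Rightarrow> nat \<Rightarrow> 'a" where
  "interleave a b = (\<lambda>k. if even k then a (k div 2) else b (k div 2))"

lemma even_part_interleave [simp]: "even_part (interleave a b) = a"
  by (simp add: even_part_def interleave_def)

lemma odd_part_interleave [simp]: "odd_part (interleave a b) = b"
  by (simp add: odd_part_def interleave_def)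

lemma interleave_even_odd_part [simp]: "interleave (even_part z) (odd_part z) = z"
proof
  show "interleave (even_part z) (odd_part z) k = z k" for k
    by (cases "even k") (auto simp: interleave_def even_part_def odd_part_def elim!: evenE oddE)
qed

lemma continuous_on_even_part: "continuous_on S even_part"
  unfolding even_part_def by (rule continuous_on_coordinatewise_then_product) (rule continuous_on_apply)

lemma continuous_on_odd_part: "continuous_on S odd_part"
  unfolding odd_part_def by (rule continuous_on_coordinatewise_then_product) (rule continuous_on_apply)

lemma continuous_on_interleave:
  assumes "continuous_on S f" "continuous_on S g"
  shows "continuous_on S (\<lambda>x. interleave (f x) (g x))"
proof (rule continuous_on_coordinatewise_then_product)
  show "continuous_on S (\<lambda>x. interleave (f x) (g x) k)" for k
    using assms by (cases "even k") (simp_all add: interleave_def continuous_on_product_then_coordinatewise)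
qed

definition interleave_set :: "(nat \<Rightarrow> 'a) set \<Rightarrow> (nat \<Rightarrow> 'a) set \<Rightarrow> (nat \<Rightarrow> 'a) set" where
  "interleave_set X1 X2 = {z. even_part z \<in> X1 \<and> odd_part z \<in> X2}"

definition interleave_map ::
  "((nat \<Rightarrow> 'a) \<Rightarrow> nat \<Rightarrow> 'a) \<Rightarrow> ((nat \<Rightarrow> 'a) \<Rightarrow> nat \<Rightarrow> 'a) \<Rightarrow> (nat \<Rightarrow> 'a) \<Rightarrow> nat \<Rightarrow> 'a" where
  "interleave_map T1 T2 z = interleave (T1 (even_part z)) (T2 (odd_part z))"

lemma funpow_interleave_map:
  "(interleave_map T1 T2 ^^ n) z = interleave ((T1 ^^ n) (even_part z)) ((T2 ^^ n) (odd_part z))"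
  by (induction n) (simp_all add: interleave_map_def)

lemma compact_interleave_set:
  assumes "compact X1" "compact X2"
  shows "compact (interleave_set X1 X2)"
proof -
  have "interleave_set X1 X2 = (\<lambda>(a, b). interleave a b) ` (X1 \<times> X2)"
    by (auto simp: interleave_set_def image_iff) (metis interleave_even_odd_part)
  moreover have "compact ((\<lambda>(a, b). interleave a b) ` (X1 \<times> X2))"
  proof (rule compact_continuous_image[OF _ compact_Times[OF assms]])
    show "continuous_on (X1 \<times> X2) (\<lambda>(a, b). interleave a b)"
      unfolding case_prod_beta
      by (rule continuous_on_interleave) (simp_all add: continuous_on_fst continuous_on_snd)
  qed
  ultimately show ?thesis by simp
qed

lemma continuous_on_interleave_map:
  assumes "continuous_on X1 T1" "continuous_on X2 T2"
  shows "continuous_on (interleave_set X1 X2) (interleave_map T1 T2)"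
  unfolding interleave_map_def
proof (rule continuous_on_interleave)
  show "continuous_on (interleave_set X1 X2) (\<lambda>z. T1 (even_part z))"
    by (rule continuous_on_compose2[OF assms(1) continuous_on_even_part])
       (auto simp: interleave_set_def)
  show "continuous_on (interleave_set X1 X2) (\<lambda>z. T2 (odd_part z))"
    by (rule continuous_on_compose2[OF assms(2) continuous_on_odd_part])
       (auto simp: interleave_set_def)
qed

lemma image_interleave_map:
  assumes "T1 ` X1 = X1" "T2 ` X2 = X2"
  shows "interleave_map T1 T2 ` interleave_set X1 X2 = interleave_set X1 X2"
proof
  show "interleave_map T1 T2 ` interleave_set X1 X2 \<subseteq> interleave_set X1 X2"
    using assms by (auto simp: interleave_set_def interleave_map_def)
  show "interleave_set X1 X2 \<subseteq> interleave_map T1 T2 ` interleave_set X1 X2"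
  proof
    fix z assume "z \<in> interleave_set X1 X2"
    then have "even_part z \<in> T1 ` X1" "odd_part z \<in> T2 ` X2"
      using assms by (simp_all add: interleave_set_def)
    then obtain a b where "a \<in> X1" "b \<in> X2" "even_part z = T1 a" "odd_part z = T2 b"
      by blast
    then have "z = interleave_map T1 T2 (interleave a b)" "interleave a b \<in> interleave_set X1 X2"
      using interleave_even_odd_part[of z] by (simp_all add: interleave_set_def interleave_map_def)
    then show "z \<in> interleave_map T1 T2 ` interleave_set X1 X2" by (rule image_eqI)
  qed
qed

lemma inj_on_interleave_map:
  assumes "inj_on T1 X1" "inj_on T2 X2"
  shows "inj_on (interleave_map T1 T2) (interleave_set X1 X2)"
proof (rule inj_onI)
  fix z z' assume z: "z \<in> interleave_set X1 X2" "z' \<in> interleave_set X1 X2"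
    and eq: "interleave_map T1 T2 z = interleave_map T1 T2 z'"
  have "T1 (even_part z) = T1 (even_part z')"
    using arg_cong[where f = even_part, OF eq] by (simp add: interleave_map_def)
  then have "even_part z = even_part z'"
    by (rule inj_onD[OF assms(1)]) (use z in \<open>simp_all add: interleave_set_def\<close>)
  moreover have "T2 (odd_part z) = T2 (odd_part z')"
    using arg_cong[where f = odd_part, OF eq] by (simp add: interleave_map_def)
  then have "odd_part z = odd_part z'"
    by (rule inj_onD[OF assms(2)]) (use z in \<open>simp_all add: interleave_set_def\<close>)
  ultimately show "z = z'" by (metis interleave_even_odd_part)
qed

lemma is_system_interleave:
  fixes T1 T2 :: "(nat \<Rightarrow> 'a::metric_space) \<Rightarrow> nat \<Rightarrow> 'a"
  assumes "is_system X1 T1" "is_system X2 T2"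
  shows "is_system (interleave_set X1 X2) (interleave_map T1 T2)"
proof -
  have X1: "compact X1" "continuous_on X1 T1" "T1 ` X1 = X1" "inj_on T1 X1"
    and X2: "compact X2" "continuous_on X2 T2" "T2 ` X2 = X2" "inj_on T2 X2"
    using assms by (simp_all add: is_system_iff)
  show ?thesis
    unfolding is_system_iff
    using compact_interleave_set[OF X1(1) X2(1)] continuous_on_interleave_map[OF X1(2) X2(2)]
      image_interleave_map[OF X1(3) X2(3)] inj_on_interleave_map[OF X1(4) X2(4)] by blast
qed

lemma inv_into_interleave_map:
  fixes T1 T2 :: "(nat \<Rightarrow> 'a::metric_space) \<Rightarrow> nat \<Rightarrow> 'a"
  assumes "is_system X1 T1" "is_system X2 T2" "z \<in> interleave_set X1 X2"
  shows "inv_into (interleave_set X1 X2) (interleave_map T1 T2) z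
           = interleave (inv_into X1 T1 (even_part z)) (inv_into X2 T2 (odd_part z))"
proof -
  let ?w = "interleave (inv_into X1 T1 (even_part z)) (inv_into X2 T2 (odd_part z))"
  have "even_part z \<in> T1 ` X1" "odd_part z \<in> T2 ` X2"
    using assms by (auto simp: is_system_iff interleave_set_def)
  then have "?w \<in> interleave_set X1 X2" "interleave_map T1 T2 ?w = z"
    by (simp_all add: interleave_set_def interleave_map_def inv_into_into f_inv_into_f)
  moreover have "inj_on (interleave_map T1 T2) (interleave_set X1 X2)"
    using is_system_interleave[OF assms(1,2)] by (simp add: is_system_iff)
  ultimately show ?thesis by (metis inv_into_f_f)
qed

lemma int_iter_interleave_map:
  fixes T1 T2 :: "(nat \<Rightarrow> 'a::metric_space) \<Rightarrow> nat \<Rightarrow> 'a"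
  assumes "is_system X1 T1" "is_system X2 T2" "z \<in> interleave_set X1 X2"
  shows "int_iter (interleave_set X1 X2) (interleave_map T1 T2) n z
           = interleave (int_iter X1 T1 n (even_part z)) (int_iter X2 T2 n (odd_part z))"
proof -
  let ?Z = "interleave_set X1 X2" and ?T = "interleave_map T1 T2"
  have inv_Z: "inv_into ?Z ?T ` ?Z \<subseteq> ?Z"
    using is_system_interleave[OF assms(1,2)] by (auto simp: is_system_iff intro: inv_into_into)
  have "(inv_into ?Z ?T ^^ m) z
          = interleave ((inv_into X1 T1 ^^ m) (even_part z)) ((inv_into X2 T2 ^^ m) (odd_part z))" for m
  proof (induction m)
    case (Suc m)
    have "(inv_into ?Z ?T ^^ m) z \<in> ?Z" by (rule funpow_image_subset[OF inv_Z assms(3)])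
    then show ?case using Suc inv_into_interleave_map[OF assms(1,2)] by simp
  qed simp
  then show ?thesis by (simp add: int_iter_def funpow_interleave_map)
qed

lemma distal_system_interleave:
  fixes T1 T2 :: "(nat \<Rightarrow> 'a::metric_space) \<Rightarrow> nat \<Rightarrow> 'a"
  assumes "distal_system X1 T1" "distal_system X2 T2"
  shows "distal_system (interleave_set X1 X2) (interleave_map T1 T2)"
proof -
  let ?Z = "interleave_set X1 X2" and ?T = "interleave_map T1 T2"
  have sys: "is_system X1 T1" "is_system X2 T2" "is_system ?Z ?T"
    using assms is_system_interleave by (auto simp: distal_system_def)
  then have "compact ?Z" and orbit: "\<And>n z. z \<in> ?Z \<Longrightarrow> int_iter ?Z ?T n z \<in> ?Z"
    by (auto simp: is_system_iff intro: int_iter_mem)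
  have "\<exists>d>0. \<forall>n. d \<le> dist (int_iter ?Z ?T n z) (int_iter ?Z ?T n z')"
    if z: "z \<in> ?Z" "z' \<in> ?Z" "z \<noteq> z'" for z z'
  proof (cases "even_part z = even_part z'")
    case False
    moreover have "even_part z \<in> X1" "even_part z' \<in> X1" using z by (auto simp: interleave_set_def)
    ultimately obtain e where "e > 0"
      and e: "\<And>n. e \<le> dist (int_iter X1 T1 n (even_part z)) (int_iter X1 T1 n (even_part z'))"
      using assms(1) unfolding distal_system_def by blast
    then show ?thesis
      using compact_uniformly_continuous[OF continuous_on_even_part \<open>compact ?Z\<close>] orbit z
      by (intro uniformly_continuous_on_dist_bounded_below[where g = even_part])
         (auto simp: int_iter_interleave_map[OF sys(1,2)] intro: e)
  next
    case True
    then have "odd_part z \<noteq> odd_part z'" using z(3) by (metis interleave_even_odd_part)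
    moreover have "odd_part z \<in> X2" "odd_part z' \<in> X2" using z by (auto simp: interleave_set_def)
    ultimately obtain e where "e > 0"
      and e: "\<And>n. e \<le> dist (int_iter X2 T2 n (odd_part z)) (int_iter X2 T2 n (odd_part z'))"
      using assms(2) unfolding distal_system_def by blast
    then show ?thesis
      using compact_uniformly_continuous[OF continuous_on_odd_part \<open>compact ?Z\<close>] orbit z
      by (intro uniformly_continuous_on_dist_bounded_below[where g = odd_part])
         (auto simp: int_iter_interleave_map[OF sys(1,2)] intro: e)
  qed
  then show ?thesis using sys(3) unfolding distal_system_def by blast
qed

lemma pw_recurrence_md_simultaneous:
  fixes T1 T2 :: "(nat \<Rightarrow> 'a::metric_space) \<Rightarrow> nat \<Rightarrow> 'a"
  assumes "pw_recurrence_md TYPE(nat \<Rightarrow> 'a) R"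
    and "distal_system X1 T1" "x1 \<in> X1" "distal_system X2 T2" "x2 \<in> X2"
    and "e1 > 0" "e2 > 0"
  shows "\<exists>n\<in>R. dist ((T1 ^^ n) x1) x1 < e1 \<and> dist ((T2 ^^ n) x2) x2 < e2"
proof -
  let ?Z = "interleave_set X1 X2" and ?T = "interleave_map T1 T2" and ?x = "interleave x1 x2"
  have "distal_system ?Z ?T" using assms(2,4) by (rule distal_system_interleave)
  moreover have "?x \<in> ?Z" using assms(3,5) by (simp add: interleave_set_def)
  ultimately have "minimal_system (orbit_closure ?T ?x) ?T" "distal_system (orbit_closure ?T ?x) ?T"
    by (simp_all add: minimal_system_orbit_closure distal_system_orbit_closure)
  then have recurrent: "\<exists>n\<in>R. dist ((?T ^^ n) ?x) ?x < d" if "d > 0" for d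
    using assms(1) mem_orbit_closure_self that unfolding pw_recurrence_md_def by blast
  have cont: "continuous_on UNIV (even_part :: (nat \<Rightarrow> 'a) \<Rightarrow> nat \<Rightarrow> 'a)"
    "continuous_on UNIV (odd_part :: (nat \<Rightarrow> 'a) \<Rightarrow> nat \<Rightarrow> 'a)"
    by (rule continuous_on_even_part continuous_on_odd_part)+
  obtain d1 where "d1 > 0"
    and d1: "\<And>z. dist z ?x < d1 \<Longrightarrow> dist (even_part z) (even_part ?x) < e1"
    using cont(1) assms(6) unfolding continuous_on_iff by (meson UNIV_I)
  obtain d2 where "d2 > 0"
    and d2: "\<And>z. dist z ?x < d2 \<Longrightarrow> dist (odd_part z) (odd_part ?x) < e2"
    using cont(2) assms(7) unfolding continuous_on_iff by (meson UNIV_I)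
  obtain n where "n \<in> R" "dist ((?T ^^ n) ?x) ?x < min d1 d2"
    using recurrent[of "min d1 d2"] \<open>d1 > 0\<close> \<open>d2 > 0\<close> by auto
  then show ?thesis
    using d1[of "(?T ^^ n) ?x"] d2[of "(?T ^^ n) ?x"] by (auto simp: funpow_interleave_map)
qed

theorem mainTheorem16:
  fixes A B :: "nat set"
  assumes "0 \<notin> A" and "0 \<notin> B"
    and "pw_recurrence_md TYPE(nat \<Rightarrow> real) (A \<union> B)"
  shows "pw_recurrence_md TYPE(nat \<Rightarrow> real) A \<or> pw_recurrence_md TYPE(nat \<Rightarrow> real) B"
proof (rule ccontr)
  assume not_rec: "\<not> ?thesis"
  then obtain X1 :: "(nat \<Rightarrow> real) set" and T1 x1 e1 where
      sys1: "distal_system X1 T1" "x1 \<in> X1" "e1 > 0"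
      and A: "\<forall>n\<in>A. e1 \<le> dist ((T1 ^^ n) x1) x1"
    unfolding pw_recurrence_md_def by (auto simp: not_less)
  obtain X2 :: "(nat \<Rightarrow> real) set" and T2 x2 e2 where
      sys2: "distal_system X2 T2" "x2 \<in> X2" "e2 > 0"
      and B: "\<forall>n\<in>B. e2 \<le> dist ((T2 ^^ n) x2) x2"
    using not_rec unfolding pw_recurrence_md_def by (auto simp: not_less)
  obtain n where "n \<in> A \<union> B" "dist ((T1 ^^ n) x1) x1 < e1" "dist ((T2 ^^ n) x2) x2 < e2"
    using pw_recurrence_md_simultaneous[OF assms(3) sys1(1,2) sys2(1,2) sys1(3) sys2(3)] by blast
  with A B show False by auto
qed

end
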